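(* Let $R>0$ and let $E\subset\mathbb{R}^d$ be an $R$-supported body. Then $$\bigcap_{a\in\partial E} C^a_{\mathcal{N}_R(E,a)}=(\partial E_R)'_R .$$
   Context: A body is a nonempty closed subset of $\mathbb{R}^d$; $S^{d-1}$ is the unit sphere; $B(x)=\{y:|y-x|<R\}$. For $A\subset\mathbb{R}^d$, $A_R=\{x:\operatorname{dist}(x,A)<R\}$ and $A'_R=\{x:\operatorname{dist}(x,A)\ge R\}$ (with $\emptyset'_R=\mathbb{R}^d$). For a body $A$ and $a\in\partial A$, $\mathcal{N}_R(A,a)=\{v\in S^{d-1}: A\cap B(a+Rv)=\emptyset\}$; $A$ is $R$-supported if $\mathcal{N}_R(A,a)\ne\emptyset$ for all $a\in\partial A$. For a nonempty closed $\mathcal K\subset S^{d-1}$ and $x\in\mathbb{R}^d$, the $R$-cone with vertex $x$ is $C^x_{\mathcal K}=\bigcap_{v\in\mathcal K}(\mathbb{R}^d\setminus B(x+Rv))$, and $C_{\mathcal K}=C^o_{\mathcal K}$. An intersection over an empty index set is $\mathbb{R}^d$. *)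

theory Defs
  imports "HOL-Analysis.Analysis"
begin

definition body :: "'a::euclidean_space set \<Rightarrow> bool" where
  "body A \<longleftrightarrow> A \<noteq> {} \<and> closed A"

definition nbhd :: "real \<Rightarrow> 'a::euclidean_space set \<Rightarrow> 'a set" where
  "nbhd R A = {x. infdist x A < R}"

definition far_set :: "real \<Rightarrow> 'a::euclidean_space set \<Rightarrow> 'a set" where
  "far_set R A = (if A = {} then UNIV else {x. infdist x A \<ge> R})"

definition normals :: "real \<Rightarrow> 'a::euclidean_space set \<Rightarrow> 'a \<Rightarrow> 'a set" where
  "normals R A a = {v \<in> sphere 0 1. A \<inter> ball (a + R *\<^sub>R v) R = {}}"

definition R_supported :: "real \<Rightarrow> 'a::euclidean_space set \<Rightarrow> bool" where
  "R_supported R A \<longleftrightarrow> body A \<and> (\<forall>a \<in> frontier A. normals R A a \<noteq> {})"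

definition R_cone :: "real \<Rightarrow> 'a::euclidean_space set \<Rightarrow> 'a \<Rightarrow> 'a set" where
  "R_cone R K x = (\<Inter>v\<in>K. - ball (x + R *\<^sub>R v) R)"

end

theory Submission
  imports Defs
begin

text \<open>
  For a closed set \<open>E\<close>, the boundary of the open neighbourhood \<open>E\<^sub>R\<close> consists
  exactly of the centres \<open>a + R v\<close> of the open \<open>R\<close>-balls that miss \<open>E\<close> and touch it
  at a boundary point \<open>a\<close>: a point at distance exactly \<open>R\<close> from \<open>E\<close> has a nearest
  point \<open>a\<close> in \<open>E\<close>, which cannot be interior since the segment towards the point
  stays outside \<open>E\<close>; conversely such a centre is at distance \<open>R\<close> from \<open>E\<close> and is
  approached along the segment from \<open>a\<close> by points of \<open>E\<^sub>R\<close>.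
  Both sides of the theorem are therefore the set of points at distance at least
  \<open>R\<close> from all these centres.
\<close>

lemma le_infdist_iff:
  "A \<noteq> {} \<Longrightarrow> r \<le> infdist x A \<longleftrightarrow> (\<forall>a\<in>A. r \<le> dist x a)"
  by (simp add: infdist_notempty le_cINF_iff)

lemma far_set_eq: "far_set R A = {x. \<forall>a\<in>A. R \<le> dist x a}"
  by (auto simp: far_set_def le_infdist_iff)

lemma mem_R_cone: "x \<in> R_cone R K a \<longleftrightarrow> (\<forall>v\<in>K. R \<le> dist (a + R *\<^sub>R v) x)"
  by (auto simp: R_cone_def mem_ball not_less)

lemma dist_along_unit_vector:
  fixes a v :: "'a::real_normed_vector"
  assumes "norm v = 1"
  shows "dist (a + s *\<^sub>R v) (a + t *\<^sub>R v) = \<bar>s - t\<bar>"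
  using assms by (simp add: dist_norm flip: scaleR_diff_left)

lemma open_nbhd: "open (nbhd R A)"
  unfolding nbhd_def by (rule open_Collect_less) (auto intro!: continuous_intros)

lemma closure_nbhd_subset: "closure (nbhd R A) \<subseteq> {x. infdist x A \<le> R}"
  by (rule closure_minimal) (auto simp: nbhd_def intro!: closed_Collect_le continuous_intros)

lemma frontier_nbhd_iff:
  "y \<in> frontier (nbhd R A) \<longleftrightarrow> y \<in> closure (nbhd R A) \<and> R \<le> infdist y A"
  using open_nbhd[of R A] by (auto simp: frontier_def interior_open nbhd_def)

lemma infdist_frontier_nbhd: "y \<in> frontier (nbhd R A) \<Longrightarrow> infdist y A = R"
  using closure_nbhd_subset frontier_nbhd_iff by fastforce

lemma ball_centre_in_frontier_nbhd:
  fixes A :: "'a::euclidean_space set"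
  assumes "R > 0" and "a \<in> A" and "v \<in> normals R A a"
  shows "a + R *\<^sub>R v \<in> frontier (nbhd R A)"
proof -
  have v: "norm v = 1" and misses: "A \<inter> ball (a + R *\<^sub>R v) R = {}"
    using assms(3) by (auto simp: normals_def)
  have "R \<le> infdist (a + R *\<^sub>R v) A"
    using misses \<open>a \<in> A\<close> by (subst le_infdist_iff) (auto simp: mem_ball not_less)
  moreover have "a + R *\<^sub>R v \<in> closure (nbhd R A)"
    unfolding closure_approachable
  proof (intro allI impI)
    fix e :: real assume "e > 0"
    define d where "d = min (e/2) R"
    have d: "0 < d" "d < e" "d \<le> R" using \<open>e > 0\<close> \<open>R > 0\<close> by (auto simp: d_def)
    have "infdist (a + (R - d) *\<^sub>R v) A \<le> dist (a + (R - d) *\<^sub>R v) a"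
      using \<open>a \<in> A\<close> by (rule infdist_le)
    also have "\<dots> < R" using d dist_along_unit_vector[OF v, of a "R - d" 0] by (simp add: v)
    finally have "a + (R - d) *\<^sub>R v \<in> nbhd R A" by (simp add: nbhd_def)
    moreover have "dist (a + (R - d) *\<^sub>R v) (a + R *\<^sub>R v) < e"
      using d dist_along_unit_vector[OF v, of a "R - d" R] by (simp add: v)
    ultimately show "\<exists>y\<in>nbhd R A. dist y (a + R *\<^sub>R v) < e" by blast
  qed
  ultimately show ?thesis by (simp add: frontier_nbhd_iff)
qed

lemma frontier_nbhd_ball_centreE:
  fixes A :: "'a::euclidean_space set"
  assumes "R > 0" and "closed A" and "A \<noteq> {}" and "y \<in> frontier (nbhd R A)"
  obtains a v where "a \<in> frontier A" "v \<in> normals R A a" "y = a + R *\<^sub>R v"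
proof -
  have "infdist y A = R"
    using \<open>y \<in> frontier (nbhd R A)\<close> by (rule infdist_frontier_nbhd)
  then have far: "\<And>z. z \<in> A \<Longrightarrow> R \<le> dist y z"
    by (metis infdist_le)
  obtain a where "a \<in> A" and "dist y a = R"
    using infdist_attains_inf[OF \<open>closed A\<close> \<open>A \<noteq> {}\<close>] \<open>infdist y A = R\<close> by metis
  define v where "v = (1 / R) *\<^sub>R (y - a)"
  have y: "y = a + R *\<^sub>R v" and v: "norm v = 1"
    using \<open>R > 0\<close> \<open>dist y a = R\<close> by (auto simp: v_def dist_norm)
  have "v \<in> normals R A a"
    using v far by (fastforce simp: normals_def mem_ball not_less y[symmetric])
  moreover have "a \<notin> interior A"
  proof
    assume "a \<in> interior A"
    then obtain e where "e > 0" "ball a e \<subseteq> A" by (meson mem_interior)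
    define d where "d = min (e/2) R"
    have d: "0 < d" "d < e" "d \<le> R" using \<open>e > 0\<close> \<open>R > 0\<close> by (auto simp: d_def)
    have "dist a (a + d *\<^sub>R v) < e"
      using d dist_along_unit_vector[OF v, of a 0 d] by (simp add: v)
    with \<open>ball a e \<subseteq> A\<close> have "a + d *\<^sub>R v \<in> A" by auto
    moreover have "dist (a + R *\<^sub>R v) (a + d *\<^sub>R v) < R"
      using d dist_along_unit_vector[OF v, of a R d] by (simp add: v)
    ultimately show False using far y by fastforce
  qed
  then have "a \<in> frontier A"
    using \<open>a \<in> A\<close> \<open>closed A\<close> by (simp add: frontier_def)
  ultimately show ?thesis using y that by blast
qed

lemma frontier_nbhd_eq_ball_centres:
  fixes A :: "'a::euclidean_space set"
  assumes "R > 0" and "closed A" and "A \<noteq> {}"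
  shows "frontier (nbhd R A) = (\<Union>a\<in>frontier A. (\<lambda>v. a + R *\<^sub>R v) ` normals R A a)"
  using frontier_nbhd_ball_centreE[OF assms] 
    ball_centre_in_frontier_nbhd[OF \<open>R > 0\<close>] frontier_subset_closed[OF \<open>closed A\<close>]
  by blast

theorem mainTheorem11:
  fixes E :: "'a::euclidean_space set" and R :: real
  assumes "R > 0" and "body E" and "R_supported R E"
  shows "(\<Inter>a\<in>frontier E. R_cone R (normals R E a) a) = far_set R (frontier (nbhd R E))"
proof -
  have "closed E" and "E \<noteq> {}" using \<open>body E\<close> by (auto simp: body_def)
  then show ?thesis
    by (auto simp: frontier_nbhd_eq_ball_centres[OF \<open>R > 0\<close>] far_set_eq mem_R_cone dist_commute)
qed

end
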